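(* Let $I$ be the two-sided ideal of $Y^{\mathrm{rtt}}_\hbar(\mathfrak{gl}_n)$ generated by $\{t^{(r)}_{11}\}_{r\geq 2}$. Then $$\operatorname{Ker}\big(\mathrm{ev}^{\mathrm{rtt}}\colon Y^{\mathrm{rtt}}_\hbar(\mathfrak{gl}_n)\to U(\mathfrak{gl}_n)\big)=I.$$
   Context: Let $\hbar$ be a formal variable and $n\geq 1$. Let $E_{ij}\in\operatorname{End}\mathbb{C}^n$ be the matrix units and $P=\sum_{i,j}E_{ij}\otimes E_{ji}$ the permutation operator; set $R(z)=1-\frac{\hbar}{z}P$. The RTT Yangian $Y^{\mathrm{rtt}}_\hbar(\mathfrak{gl}_n)$ is the associative $\mathbb{C}[\hbar]$-algebra generated by $\{t^{(r)}_{ij}\}_{1\leq i,j\leq n}^{r\geq 1}$ subject to $R(z-w)T_1(z)T_2(w)=T_2(w)T_1(z)R(z-w)$ (an equality of series in $z,w$ after multiplying both sides by $z-w$), where $T(z)=\sum_{i,j}t_{ij}(z)\otimes E_{ij}$, $t_{ij}(z)=\delta_{ij}+\hbar\sum_{r\geq1}t^{(r)}_{ij}z^{-r}$, $T_1(z)=T(z)\otimes 1$, $T_2(w)=1\otimes T(w)$. Equivalently, $(z-w)[t_{ij}(z),t_{kl}(w)]=\hbar\big(t_{kj}(z)t_{il}(w)-t_{kj}(w)t_{il}(z)\big)$ for all $i,j,k,l$. Let $U(\mathfrak{gl}_n)$ denote the universal enveloping algebra of $\mathfrak{gl}_n$ over $\mathbb{C}[\hbar]$ (with standard basis $E_{ij}$).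 The RTT evaluation homomorphism $\mathrm{ev}^{\mathrm{rtt}}\colon Y^{\mathrm{rtt}}_\hbar(\mathfrak{gl}_n)\twoheadrightarrow U(\mathfrak{gl}_n)$ is the (well-defined, surjective) $\mathbb{C}[\hbar]$-algebra homomorphism given by $t^{(r)}_{ij}\mapsto\delta_{r,1}E_{ij}$. *)

theory Defs
  imports "HOL-Library.Poly_Mapping" "HOL-Computational_Algebra.Polynomial"
begin

datatype 'v word = Word "'v list"

fun unword :: "'v word \<Rightarrow> 'v list" where "unword (Word xs) = xs"

instantiation word :: (type) monoid_add
begin
definition zero_word_def: "0 = Word []"
definition plus_word_def: "a + b = Word (unword a @ unword b)"
instance by standard (auto simp: zero_word_def plus_word_def; metis unword.simps word.exhaust)+
end

text \<open>The free associative C[hbar]-algebra on generators of type 'v: finitely supported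
  coefficient functions on words, with the convolution product.\<close>
type_synonym 'v falg = "'v word \<Rightarrow>\<^sub>0 complex poly"

definition fa_gen :: "'v \<Rightarrow> 'v falg" where
  "fa_gen v = Poly_Mapping.single (Word [v]) 1"

definition fa_const :: "complex poly \<Rightarrow> 'v falg" where
  "fa_const c = Poly_Mapping.single 0 c"

definition fa_hbar :: "'v falg" where
  "fa_hbar = fa_const [:0, 1:]"

definition fa_hom :: "('v \<Rightarrow> 'w falg) \<Rightarrow> 'v falg \<Rightarrow> 'w falg" where
  "fa_hom \<sigma> f = (\<Sum>w\<in>Poly_Mapping.keys f. fa_const (Poly_Mapping.lookup f w) * prod_list (map \<sigma> (unword w)))"

definition two_sided_ideal :: "'a::ring_1 set \<Rightarrow> bool" where
  "two_sided_ideal J \<longleftrightarrow> 0 \<in> J \<and> (\<forall>a\<in>J. \<forall>b\<in>J. a + b \<in> J) \<and> (\<forall>a\<in>J. - a \<in> J)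
     \<and> (\<forall>a\<in>J. \<forall>x. x * a \<in> J \<and> a * x \<in> J)"

definition ideal_gen :: "'a::ring_1 set \<Rightarrow> 'a set" where
  "ideal_gen S = \<Inter>{J. two_sided_ideal J \<and> S \<subseteq> J}"

text \<open>Indices 1..n are represented by a finite linearly ordered type 'n (n = CARD('n));
  the index 1 is its least element.  The generator (r, i, j) of the free algebra stands
  for t_ij^(r+1).\<close>

definition idx1 :: "'n::{finite,linorder}" where
  "idx1 = Min UNIV"

fun tt :: "nat \<Rightarrow> 'n \<Rightarrow> 'n \<Rightarrow> (nat \<times> 'n \<times> 'n) falg" where
  "tt 0 i j = 0"
| "tt (Suc r) i j = fa_gen (r, i, j)"

definition dlt :: "'n \<Rightarrow> 'n \<Rightarrow> 'v falg" where
  "dlt a b = (if a = b then 1 else 0)"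

definition comm :: "'a::ring \<Rightarrow> 'a \<Rightarrow> 'a" where
  "comm a b = a * b - b * a"

text \<open>Coefficient of z^(-r) w^(-s) (r, s \<ge> 0) of
  (z-w)[t_ij(z),t_kl(w)] - hbar (t_kj(z) t_il(w) - t_kj(w) t_il(z)), divided by hbar^2,
  with the convention t^(0) = 0 in the expressions below.\<close>
definition rtt_rel :: "nat \<Rightarrow> nat \<Rightarrow> 'n \<Rightarrow> 'n \<Rightarrow> 'n \<Rightarrow> 'n \<Rightarrow> (nat \<times> 'n \<times> 'n) falg" where
  "rtt_rel r s i j k l =
     comm (tt (Suc r) i j) (tt s k l) - comm (tt r i j) (tt (Suc s) k l)
     - ((if r = 0 then dlt k j * tt s i l - dlt i l * tt s k j else 0)
        + (if s = 0 then dlt i l * tt r k j - dlt k j * tt r i l else 0)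
        + fa_hbar * (tt r k j * tt s i l - tt s k j * tt r i l))"

definition rtt_rels :: "(nat \<times> 'n \<times> 'n) falg set" where
  "rtt_rels = {rtt_rel r s i j k l | r s i j k l. True}"

definition gl_rels :: "('n \<times> 'n) falg set" where
  "gl_rels = {comm (fa_gen (i, j)) (fa_gen (k, l))
               - (dlt j k * fa_gen (i, l) - dlt l i * fa_gen (k, j)) | i j k l. True}"

text \<open>The evaluation map on generators: t_ij^(r) \<mapsto> \<delta>_{r,1} E_ij.\<close>
definition ev_gen :: "nat \<times> 'n \<times> 'n \<Rightarrow> ('n \<times> 'n) falg" where
  "ev_gen g = (case g of (r, i, j) \<Rightarrow> if r = 0 then fa_gen (i, j) else 0)"

end

theory Submission
  imports Defs
begin

text \<open>Let sigma be the homomorphism E_ij |-> t_ij^(1).  It maps the defining relations of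
  U(gl_n) to the RTT relations of degree (0, 1), while ev sends every RTT relation into the
  ideal of relations of U(gl_n) and kills t_11^(r) for r >= 2; hence ev(I) = 0.  Conversely every
  t_kl^(s) with s >= 2 lies in I: the RTT relation for [t^(1), t^(s)] moves the indices of
  t_11^(s) first to t_k1^(s) and then to t_kl^(s).  So sigma o ev is the identity modulo I on
  generators, whence f = sigma(ev f) modulo I, and sigma maps the kernel of ev into I.\<close>

lemma poly_mapping_sum_single:
  "(f :: 'a \<Rightarrow>\<^sub>0 'b::comm_monoid_add) = (\<Sum>w\<in>Poly_Mapping.keys f. Poly_Mapping.single w (Poly_Mapping.lookup f w))"
  by (rule poly_mapping_eqI) (simp add: lookup_sum lookup_single when_def in_keys_iff)

lemma poly_mapping_single_add_induct [case_names zero single add]: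
  assumes "P 0"
    and "\<And>w c. P (Poly_Mapping.single w c)"
    and "\<And>f g. P f \<Longrightarrow> P g \<Longrightarrow> P (f + g)"
  shows "P (f :: 'a \<Rightarrow>\<^sub>0 'b::comm_monoid_add)"
proof -
  have "P (\<Sum>w\<in>A. Poly_Mapping.single w (h w))" if "finite A" for A and h :: "'a \<Rightarrow> 'b"
    using that by (induction A rule: finite_induct) (simp_all add: assms)
  then show ?thesis
    by (subst poly_mapping_sum_single) simp
qed

lemma fa_const_add: "fa_const (a + b) = fa_const a + fa_const b"
  by (simp add: fa_const_def single_add)

lemma fa_const_mult: "fa_const (a * b) = fa_const a * fa_const b"
  by (simp add: fa_const_def mult_single)

lemma fa_const_0 [simp]: "fa_const 0 = 0"
  by (simp add: fa_const_def)

lemma fa_const_1 [simp]: "fa_const 1 = 1"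
  by (simp add: fa_const_def)

lemma fa_const_commute: "fa_const c * (x :: 'v falg) = x * fa_const c"
  by (induction x rule: poly_mapping_single_add_induct)
    (simp_all add: fa_const_def mult_single mult.commute distrib_left distrib_right)

lemma fa_hom_single:
  "fa_hom \<sigma> (Poly_Mapping.single w c) = fa_const c * prod_list (map \<sigma> (unword w))"
  by (cases "c = 0") (simp_all add: fa_hom_def)

lemma fa_hom_add: "fa_hom \<sigma> (f + g) = fa_hom \<sigma> f + fa_hom \<sigma> g"
proof -
  let ?S = "Poly_Mapping.keys f \<union> Poly_Mapping.keys g"
  have on_S: "fa_hom \<sigma> h = (\<Sum>w\<in>?S. fa_const (Poly_Mapping.lookup h w) * prod_list (map \<sigma> (unword w)))"
    if "Poly_Mapping.keys h \<subseteq> ?S" for h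
    unfolding fa_hom_def by (rule sum.mono_neutral_left) (use that in \<open>auto simp: in_keys_iff\<close>)
  show ?thesis
    by (subst (1 2 3) on_S) (auto simp: keys_add lookup_add fa_const_add distrib_right sum.distrib)
qed

lemma fa_hom_0 [simp]: "fa_hom \<sigma> 0 = 0"
  by (simp add: fa_hom_def)

lemma fa_hom_uminus: "fa_hom \<sigma> (- f) = - fa_hom \<sigma> f"
  using fa_hom_add[of \<sigma> f "- f"] by (simp add: eq_neg_iff_add_eq_0 add.commute)

lemma fa_hom_diff: "fa_hom \<sigma> (f - g) = fa_hom \<sigma> f - fa_hom \<sigma> g"
  using fa_hom_add[of \<sigma> f "- g"] by (simp add: fa_hom_uminus)

lemma fa_hom_mult: "fa_hom \<sigma> (f * g) = fa_hom \<sigma> f * fa_hom \<sigma> g"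
proof (induction f arbitrary: g rule: poly_mapping_single_add_induct)
  case (single w c)
  show ?case
  proof (induction g rule: poly_mapping_single_add_induct)
    case (single v d)
    let ?A = "prod_list (map \<sigma> (unword w))" and ?B = "prod_list (map \<sigma> (unword v))"
    have "fa_const (c * d) * (?A * ?B) = fa_const c * (fa_const d * ?A) * ?B"
      by (simp add: fa_const_mult mult.assoc)
    also have "\<dots> = fa_const c * ?A * (fa_const d * ?B)"
      by (simp add: fa_const_commute[of d] mult.assoc)
    finally show ?case
      by (simp add: mult_single fa_hom_single plus_word_def)
  qed (simp_all add: fa_hom_add distrib_left)
qed (simp_all add: fa_hom_add distrib_right)

lemma fa_hom_const [simp]: "fa_hom \<sigma> (fa_const c) = fa_const c"
  by (simp add: fa_const_def fa_hom_single zero_word_def)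

lemma fa_hom_1 [simp]: "fa_hom \<sigma> 1 = 1"
  using fa_hom_const[of \<sigma> 1] by simp

lemma fa_hom_prod_list: "fa_hom \<sigma> (prod_list xs) = prod_list (map (fa_hom \<sigma>) xs)"
  by (induction xs) (simp_all add: fa_hom_mult)

lemma fa_hom_hbar [simp]: "fa_hom \<sigma> fa_hbar = fa_hbar"
  by (simp add: fa_hbar_def)

lemma fa_hom_dlt [simp]: "fa_hom \<sigma> (dlt a b) = dlt a b"
  by (simp add: dlt_def)

lemma fa_hom_gen [simp]: "fa_hom \<sigma> (fa_gen v) = \<sigma> v"
  by (simp add: fa_gen_def fa_hom_single)

lemma prod_list_fa_gen: "prod_list (map fa_gen xs) = Poly_Mapping.single (Word xs) 1"
  by (induction xs) (simp_all add: fa_gen_def mult_single plus_word_def flip: zero_word_def)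

lemma Word_unword [simp]: "Word (unword w) = w"
  by (cases w) simp

lemma fa_hom_fa_gen [simp]: "fa_hom fa_gen f = f"
  by (induction f rule: poly_mapping_single_add_induct)
    (simp_all add: fa_hom_add fa_hom_single prod_list_fa_gen fa_const_def mult_single)

lemma fa_hom_fa_hom: "fa_hom \<sigma> (fa_hom \<tau> f) = fa_hom (fa_hom \<sigma> \<circ> \<tau>) f"
  by (induction f rule: poly_mapping_single_add_induct)
    (simp_all add: fa_hom_add fa_hom_single fa_hom_mult fa_hom_prod_list comp_def)

context
  fixes J :: "'a::ring_1 set"
  assumes J: "two_sided_ideal J"
begin

lemma ideal_zero: "0 \<in> J"
  using J unfolding two_sided_ideal_def by blast

lemma ideal_add: "a \<in> J \<Longrightarrow> b \<in> J \<Longrightarrow> a + b \<in> J"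
  using J unfolding two_sided_ideal_def by blast

lemma ideal_uminus: "a \<in> J \<Longrightarrow> - a \<in> J"
  using J unfolding two_sided_ideal_def by blast

lemma ideal_diff: "a \<in> J \<Longrightarrow> b \<in> J \<Longrightarrow> a - b \<in> J"
  using ideal_add[of a "- b"] ideal_uminus[of b] by simp

lemma ideal_mult_left: "a \<in> J \<Longrightarrow> x * a \<in> J"
  using J unfolding two_sided_ideal_def by blast

lemma ideal_mult_right: "a \<in> J \<Longrightarrow> a * x \<in> J"
  using J unfolding two_sided_ideal_def by blast

lemma ideal_comm: "b \<in> J \<Longrightarrow> comm a b \<in> J"
  unfolding comm_def by (intro ideal_diff ideal_mult_left ideal_mult_right)

end

lemma two_sided_ideal_ideal_gen: "two_sided_ideal (ideal_gen S)"
  unfolding ideal_gen_def two_sided_ideal_def by auto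

lemma ideal_gen_superset: "s \<in> S \<Longrightarrow> s \<in> ideal_gen S"
  unfolding ideal_gen_def by auto

lemma ideal_gen_least: "two_sided_ideal J \<Longrightarrow> S \<subseteq> J \<Longrightarrow> ideal_gen S \<subseteq> J"
  unfolding ideal_gen_def by auto

lemma two_sided_ideal_fa_hom_vimage:
  "two_sided_ideal J \<Longrightarrow> two_sided_ideal {f. fa_hom \<sigma> f \<in> J}"
  unfolding two_sided_ideal_def by (auto simp: fa_hom_add fa_hom_uminus fa_hom_mult)

lemma fa_hom_ideal_gen:
  assumes "f \<in> ideal_gen S" and "two_sided_ideal J" and "\<And>s. s \<in> S \<Longrightarrow> fa_hom \<sigma> s \<in> J"
  shows "fa_hom \<sigma> f \<in> J"
  using ideal_gen_least[OF two_sided_ideal_fa_hom_vimage[OF assms(2)], of S \<sigma>] assms(1,3) by blast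

lemma prod_list_diff_in_ideal:
  assumes J: "two_sided_ideal J" and "\<And>v. \<sigma> v - \<tau> v \<in> J"
  shows "prod_list (map \<sigma> xs) - prod_list (map \<tau> xs) \<in> J"
proof (induction xs)
  case (Cons x xs)
  let ?A = "prod_list (map \<sigma> xs)" and ?B = "prod_list (map \<tau> xs)"
  have "(\<sigma> x - \<tau> x) * ?A + \<tau> x * (?A - ?B) \<in> J"
    using assms Cons by (intro ideal_add ideal_mult_left ideal_mult_right)
  then show ?case
    by (simp add: algebra_simps)
qed (simp add: ideal_zero[OF J])

lemma fa_hom_diff_in_ideal:
  assumes J: "two_sided_ideal J" and "\<And>v. \<sigma> v - \<tau> v \<in> J"
  shows "fa_hom \<sigma> f - fa_hom \<tau> f \<in> J"
proof (induction f rule: poly_mapping_single_add_induct)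
  case (single w c)
  have "fa_const c * (prod_list (map \<sigma> (unword w)) - prod_list (map \<tau> (unword w))) \<in> J"
    by (intro ideal_mult_left[OF J] prod_list_diff_in_ideal[OF assms])
  then show ?case
    by (simp add: fa_hom_single right_diff_distrib)
next
  case (add f g)
  then have "(fa_hom \<sigma> f - fa_hom \<tau> f) + (fa_hom \<sigma> g - fa_hom \<tau> g) \<in> J"
    by (rule ideal_add[OF J])
  then show ?case
    by (simp add: fa_hom_add algebra_simps)
qed (simp add: ideal_zero[OF J])

definition gl_rel :: "'n \<Rightarrow> 'n \<Rightarrow> 'n \<Rightarrow> 'n \<Rightarrow> ('n \<times> 'n) falg" where
  "gl_rel i j k l = comm (fa_gen (i, j)) (fa_gen (k, l)) - (dlt j k * fa_gen (i, l) - dlt l i * fa_gen (k, j))"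

lemma gl_rel_in_ideal_gen_gl_rels: "gl_rel i j k l \<in> ideal_gen gl_rels"
  by (rule ideal_gen_superset) (auto simp: gl_rels_def gl_rel_def)

lemma rtt_rel_in_ideal_gen: "rtt_rel r s i j k l \<in> ideal_gen (rtt_rels \<union> S)"
  unfolding rtt_rels_def by (rule ideal_gen_superset) blast

lemma dlt_commute: "dlt a b = dlt b a"
  by (simp add: dlt_def)

lemma rtt_rel_0:
  assumes "s \<noteq> 0"
  shows "rtt_rel 0 s i j k l = comm (tt 1 i j) (tt s k l) - (dlt k j * tt s i l - dlt i l * tt s k j)"
  using assms by (simp add: rtt_rel_def comm_def)

lemma tt_1 [simp]: "tt 1 i j = fa_gen (0, i, j)"
  by (simp add: One_nat_def)

lemma fa_hom_ev_tt: "fa_hom ev_gen (tt r i j) = (if r = 1 then fa_gen (i, j) else 0)"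
  by (cases r) (auto simp: ev_gen_def)

text \<open>For r = s = 1 the two summands of the hbar-term both evaluate to E_kj E_il and cancel.\<close>
lemma fa_hom_ev_rtt_rel:
  "fa_hom ev_gen (rtt_rel r s i j k l) =
     (if r = 0 \<and> s = 1 then gl_rel i j k l else if r = 1 \<and> s = 0 then - gl_rel i j k l else 0)"
  by (simp add: rtt_rel_def gl_rel_def comm_def fa_hom_diff fa_hom_add fa_hom_mult fa_hom_ev_tt
      ev_gen_def dlt_commute[of j k] dlt_commute[of l i] algebra_simps)

definition ev_section_gen :: "'n \<times> 'n \<Rightarrow> (nat \<times> 'n \<times> 'n) falg" where
  "ev_section_gen = (\<lambda>(i, j). tt 1 i j)"

lemma fa_hom_ev_section_gl_rel: "fa_hom ev_section_gen (gl_rel i j k l) = rtt_rel 0 1 i j k l"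
  by (simp add: gl_rel_def rtt_rel_0 comm_def fa_hom_diff fa_hom_mult ev_section_gen_def
      dlt_commute[of j k] dlt_commute[of l i])

lemma tt_in_ideal_of_diagonal:
  assumes J: "two_sided_ideal J" and rtt: "rtt_rels \<subseteq> J" and diag: "tt s a a \<in> J"
  shows "tt s k l \<in> J"
proof (cases "s = 0")
  case False
  have rel: "rtt_rel 0 s i j k' l' \<in> J" for i j k' l'
    using rtt unfolding rtt_rels_def by blast
  have col: "tt s k' a \<in> J" for k'
  proof -
    have "tt s k' a = comm (tt 1 k' a) (tt s a a) + dlt k' a * tt s a a - rtt_rel 0 s k' a a a"
      by (simp add: rtt_rel_0[OF False] dlt_def)
    also have "\<dots> \<in> J"
      using J diag rel by (intro ideal_diff ideal_add ideal_comm ideal_mult_left)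
    finally show ?thesis .
  qed
  have "tt s k l = rtt_rel 0 s a l k a - comm (tt 1 a l) (tt s k a) + dlt k l * tt s a a"
    by (simp add: rtt_rel_0[OF False] dlt_def)
  also have "\<dots> \<in> J"
    using J diag col rel by (intro ideal_diff ideal_add ideal_comm ideal_mult_left)
  finally show ?thesis .
qed (simp add: ideal_zero[OF J])

lemma fa_hom_ev_section_ideal_gen:
  fixes g :: "('n \<times> 'n) falg"
  assumes "g \<in> ideal_gen gl_rels"
  shows "fa_hom ev_section_gen g \<in> ideal_gen (rtt_rels \<union> S)"
  using assms two_sided_ideal_ideal_gen
proof (rule fa_hom_ideal_gen)
  fix x :: "('n \<times> 'n) falg"
  assume "x \<in> gl_rels"
  then obtain i j k l where "x = gl_rel i j k l"
    unfolding gl_rels_def gl_rel_def by blast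
  then show "fa_hom ev_section_gen x \<in> ideal_gen (rtt_rels \<union> S)"
    by (simp add: fa_hom_ev_section_gl_rel rtt_rel_in_ideal_gen)
qed

lemma fa_hom_ev_ideal_gen:
  fixes a :: 'n
  assumes "f \<in> ideal_gen (rtt_rels \<union> {tt r a a | r. r \<ge> 2})"
  shows "fa_hom ev_gen f \<in> ideal_gen gl_rels"
  using assms two_sided_ideal_ideal_gen
proof (rule fa_hom_ideal_gen)
  fix x :: "(nat \<times> 'n \<times> 'n) falg"
  assume "x \<in> rtt_rels \<union> {tt r a a | r. r \<ge> 2}"
  then consider (rtt) r s i j k l where "x = rtt_rel r s i j k l"
    | (diagonal) r where "x = tt r a a" and "r \<ge> 2"
    unfolding rtt_rels_def by blast
  then show "fa_hom ev_gen x \<in> ideal_gen gl_rels"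
    by cases (simp_all add: fa_hom_ev_rtt_rel fa_hom_ev_tt gl_rel_in_ideal_gen_gl_rels
        ideal_zero ideal_uminus two_sided_ideal_ideal_gen)
qed

context
  fixes J :: "(nat \<times> 'n \<times> 'n) falg set" and a :: 'n
  assumes J: "two_sided_ideal J" and rtt: "rtt_rels \<subseteq> J"
    and diag: "\<And>s. s \<ge> 2 \<Longrightarrow> tt s a a \<in> J"
begin

lemma ev_section_ev_gen_congruent: "fa_gen v - fa_hom ev_section_gen (ev_gen v) \<in> J"
proof -
  obtain r i j where v: "v = (r, i, j)"
    by (cases v) auto
  show ?thesis
  proof (cases r)
    case 0
    then show ?thesis
      by (simp add: v ev_gen_def ev_section_gen_def ideal_zero[OF J])
  next
    case (Suc r')
    have "tt (Suc (Suc r')) i j \<in> J"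
      by (rule tt_in_ideal_of_diagonal[OF J rtt diag]) simp
    then show ?thesis
      by (simp add: v Suc ev_gen_def)
  qed
qed

lemma ev_section_ev_congruent: "f - fa_hom ev_section_gen (fa_hom ev_gen f) \<in> J"
proof -
  have "fa_hom fa_gen f - fa_hom (fa_hom ev_section_gen \<circ> ev_gen) f \<in> J"
    by (rule fa_hom_diff_in_ideal[OF J]) (simp add: ev_section_ev_gen_congruent)
  then show ?thesis
    by (simp add: fa_hom_fa_hom)
qed

end

theorem theorem2p15:
  fixes f :: "(nat \<times> ('n::{finite,linorder}) \<times> 'n) falg"
  shows "fa_hom ev_gen f \<in> ideal_gen (gl_rels :: ('n \<times> 'n) falg set)
         \<longleftrightarrow> f \<in> ideal_gen (rtt_rels \<union> {tt r idx1 idx1 | r. r \<ge> 2})"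
    (is "_ \<longleftrightarrow> f \<in> ?I")
proof
  have I: "two_sided_ideal ?I"
    by (rule two_sided_ideal_ideal_gen)
  assume "fa_hom ev_gen f \<in> ideal_gen gl_rels"
  then have lifted: "fa_hom ev_section_gen (fa_hom ev_gen f) \<in> ?I"
    by (rule fa_hom_ev_section_ideal_gen)
  have congruent: "f - fa_hom ev_section_gen (fa_hom ev_gen f) \<in> ?I"
  proof (rule ev_section_ev_congruent[OF I])
    show "rtt_rels \<subseteq> ?I"
      by (blast intro: ideal_gen_superset)
    show "tt s idx1 idx1 \<in> ?I" if "s \<ge> 2" for s
      using that by (blast intro: ideal_gen_superset)
  qed
  from ideal_add[OF I congruent lifted] show "f \<in> ?I"
    by simp
next
  assume "f \<in> ?I"
  then show "fa_hom ev_gen f \<in> ideal_gen gl_rels"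
    by (rule fa_hom_ev_ideal_gen)
qed

end
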